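(* Let $I\subseteq\mathbb R[x_1,\dots,x_n]$ be an ideal such that $\mathcal V_{\mathbb R}(I)$ has a convex-singular point. Then $I$ is not $\mathrm{TH}$-exact.
   Context: $\mathbb{R}[\mathbf x]_k$ denotes the polynomials of degree at most $k$. $\mathcal V_{\mathbb R}(I)=\{x\in\mathbb R^n: f(x)=0\ \forall f\in I\}$. A polynomial $h$ is $k$-sos modulo $I$ if there are $g_1,\dots,g_r\in\mathbb{R}[\mathbf x]_k$ with $h-\sum_i g_i^2\in I$. The $k$-th theta body is $\mathrm{TH}_k(I)=\{p\in\mathbb R^n: l(p)\ge 0$ for every $l\in\mathbb{R}[\mathbf x]_1$ that is $k$-sos modulo $I\}$. $I$ is $\mathrm{TH}_k$-exact if $\mathrm{TH}_k(I)=\operatorname{cl}(\operatorname{conv}(\mathcal V_{\mathbb R}(I)))$, and $\mathrm{TH}$-exact if it is $\mathrm{TH}_k$-exact for some $k$. For $p\in\mathcal V_{\mathbb R}(I)$, the tangent space $T_p(I)$ is the affine subspace through $p$ orthogonal to the linear span of the gradients $\nabla f(p)$ of all polynomials $f$ vanishing on $\mathcal V_{\mathbb R}(I)$. A point $p\in\mathcal V_{\mathbb R}(I)$ is convex-singular if it lies on the (relative) boundary of $\operatorname{conv}(\mathcal V_{\mathbb R}(I))$ and $T_p(I)$ intersects the relative interior of $\operatorname{conv}(\mathcal V_{\mathbb R}(I))$. *)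

theory Defs
  imports "HOL-Analysis.Analysis"
begin

text \<open>Polynomials in R[x_1..x_n] are represented by the polynomial functions on real^'n
  (faithful since R is infinite).\<close>

definition monomial_fun :: "('n::finite \<Rightarrow> nat) \<Rightarrow> real^'n \<Rightarrow> real" where
  "monomial_fun \<alpha> x = (\<Prod>i\<in>UNIV. (x $ i) ^ \<alpha> i)"

definition poly_deg_le :: "nat \<Rightarrow> (real^'n::finite \<Rightarrow> real) \<Rightarrow> bool" where
  "poly_deg_le k f \<longleftrightarrow> (\<exists>c :: ('n \<Rightarrow> nat) \<Rightarrow> real.
      finite {\<alpha>. c \<alpha> \<noteq> 0} \<and> (\<forall>\<alpha>. c \<alpha> \<noteq> 0 \<longrightarrow> sum \<alpha> UNIV \<le> k) \<and>
      f = (\<lambda>x. \<Sum>\<alpha>\<in>{\<alpha>. c \<alpha> \<noteq> 0}. c \<alpha> * monomial_fun \<alpha> x))"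

definition poly_fun :: "(real^'n::finite \<Rightarrow> real) \<Rightarrow> bool" where
  "poly_fun f \<longleftrightarrow> (\<exists>k. poly_deg_le k f)"

definition poly_ideal :: "(real^'n::finite \<Rightarrow> real) set \<Rightarrow> bool" where
  "poly_ideal I \<longleftrightarrow> I \<noteq> {} \<and> (\<forall>f\<in>I. poly_fun f) \<and>
     (\<forall>f\<in>I. \<forall>g\<in>I. (\<lambda>x. f x + g x) \<in> I) \<and>
     (\<forall>f\<in>I. \<forall>h. poly_fun h \<longrightarrow> (\<lambda>x. h x * f x) \<in> I)"

definition real_variety :: "(real^'n::finite \<Rightarrow> real) set \<Rightarrow> (real^'n) set" where
  "real_variety I = {x. \<forall>f\<in>I. f x = 0}"

definition sos_mod :: "(real^'n::finite \<Rightarrow> real) set \<Rightarrow> nat \<Rightarrow> (real^'n \<Rightarrow> real) \<Rightarrow> bool" where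
  "sos_mod I k h \<longleftrightarrow> (\<exists>gs :: (real^'n \<Rightarrow> real) list.
      (\<forall>g\<in>set gs. poly_deg_le k g) \<and> (\<lambda>x. h x - (\<Sum>g\<leftarrow>gs. (g x)^2)) \<in> I)"

definition theta_body :: "nat \<Rightarrow> (real^'n::finite \<Rightarrow> real) set \<Rightarrow> (real^'n) set" where
  "theta_body k I = {p. \<forall>l. poly_deg_le 1 l \<and> sos_mod I k l \<longrightarrow> l p \<ge> 0}"

definition TH_exact_k :: "nat \<Rightarrow> (real^'n::finite \<Rightarrow> real) set \<Rightarrow> bool" where
  "TH_exact_k k I \<longleftrightarrow> theta_body k I = closure (convex hull (real_variety I))"

definition TH_exact :: "(real^'n::finite \<Rightarrow> real) set \<Rightarrow> bool" where
  "TH_exact I \<longleftrightarrow> (\<exists>k\<ge>1. TH_exact_k k I)"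

definition gradient :: "(real^'n::finite \<Rightarrow> real) \<Rightarrow> real^'n \<Rightarrow> real^'n" where
  "gradient f p = (\<chi> i. frechet_derivative f (at p) (axis i 1))"

definition tangent_space :: "(real^'n::finite \<Rightarrow> real) set \<Rightarrow> real^'n \<Rightarrow> (real^'n) set" where
  "tangent_space I p = {x. \<forall>f. poly_fun f \<and> (\<forall>y\<in>real_variety I. f y = 0)
      \<longrightarrow> (x - p) \<bullet> gradient f p = 0}"

definition convex_singular :: "(real^'n::finite \<Rightarrow> real) set \<Rightarrow> real^'n \<Rightarrow> bool" where
  "convex_singular I p \<longleftrightarrow> p \<in> real_variety I \<and>
     p \<in> rel_frontier (convex hull (real_variety I)) \<and>
     tangent_space I p \<inter> rel_interior (convex hull (real_variety I)) \<noteq> {}"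

end

theory Submission
  imports Defs
begin

(* Let p be a convex-singular point of V = V_R(I), with H = conv V, and q a point of
   T_p(I) in the relative interior of H.  Suppose TH_k(I) = cl H.
   1. Linear algebra: the functional g |-> grad g(p) . (q - p) on polynomials of degree
      at most k kills every polynomial vanishing on V, hence by finite-dimensional
      duality it equals a finite combination  sum_{y in F} lam_y g(y)  of evaluations
      at points y of V.
   2. If l is linear and l = sum g_i^2 mod I, then l - sum g_i^2 vanishes on V, so its
      derivative along q - p is zero; this expresses l q - l p through the cross terms
      g_i(y) g_i(p), which are bounded by eps l(p) + l(y) / eps.  Since q is relatively
      interior and l >= 0 on H, l(y) <= K l(q); altogether l q <= C l p for a constant C
      independent of l (lemma tangent_sos_bound).
   3. The point r = p + s (p - q) lies outside cl H for every s > 0 because p is on the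
      relative boundary; a separating k-sos l with l r < 0 contradicts step 2 for small s. *)

lemma monomial_differentiable: "monomial_fun \<alpha> differentiable (at x)"
proof -
  have "\<And>i. (\<lambda>x. (x $ i) ^ \<alpha> i) differentiable (at x)"
    by (intro differentiable_power bounded_linear_imp_differentiable bounded_linear_vec_nth)
  then have "\<And>i. ((\<lambda>x. (x $ i) ^ \<alpha> i) has_derivative
      frechet_derivative (\<lambda>x. (x $ i) ^ \<alpha> i) (at x)) (at x)"
    using frechet_derivative_works by blast
  then have "((\<lambda>x. \<Prod>i\<in>UNIV. (x $ i) ^ \<alpha> i) has_derivative
      (\<lambda>y. \<Sum>i\<in>UNIV. frechet_derivative (\<lambda>x. (x $ i) ^ \<alpha> i) (at x) y
                      * (\<Prod>j\<in>UNIV - {i}. (x $ j) ^ \<alpha> j))) (at x)"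
    by (intro has_derivative_prod) blast
  then show ?thesis unfolding monomial_fun_def[abs_def] differentiable_def by blast
qed

lemma poly_deg_le_has_derivative:
  assumes "poly_deg_le k f"
  shows "(f has_derivative frechet_derivative f (at x)) (at x)"
proof -
  have "f differentiable (at x)"
    using assms unfolding poly_deg_le_def
    by (auto intro!: differentiable_sum differentiable_mult monomial_differentiable
             simp: differentiable_const)
  then show ?thesis using frechet_derivative_works by blast
qed

lemma gradient_inner:
  fixes f :: "real^'n::finite \<Rightarrow> real"
  assumes "(f has_derivative f') (at p)"
  shows "v \<bullet> gradient f p = f' v"
proof -
  have fd: "frechet_derivative f (at p) = f'" using frechet_derivative_at[OF assms] by simp
  have "linear f'" using assms has_derivative_linear by blast
  then have "f' v = f' (\<Sum>i\<in>UNIV. v $ i *\<^sub>R axis i 1)"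
    using basis_expansion[of v] by (simp add: scalar_mult_eq_scaleR)
  also have "\<dots> = (\<Sum>i\<in>UNIV. v $ i * f' (axis i 1))"
    using \<open>linear f'\<close> by (simp add: linear_sum linear_scale)
  finally have "f' v = (\<Sum>i\<in>UNIV. v $ i * f' (axis i 1))" .
  then show ?thesis unfolding gradient_def fd inner_vec_def by simp
qed

lemma gradient_monomial_comb:
  "v \<bullet> gradient (\<lambda>x. \<Sum>\<alpha>\<in>A. c \<alpha> * monomial_fun \<alpha> x) p
     = (\<Sum>\<alpha>\<in>A. c \<alpha> * frechet_derivative (monomial_fun \<alpha>) (at p) v)"
proof -
  have "\<And>\<alpha>. (monomial_fun \<alpha> has_derivative frechet_derivative (monomial_fun \<alpha>) (at p)) (at p)"
    using monomial_differentiable frechet_derivative_works by blast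
  then have "((\<lambda>x. \<Sum>\<alpha>\<in>A. c \<alpha> * monomial_fun \<alpha> x) has_derivative
      (\<lambda>h. \<Sum>\<alpha>\<in>A. c \<alpha> * frechet_derivative (monomial_fun \<alpha>) (at p) h)) (at p)"
    by (intro has_derivative_sum has_derivative_mult_right)
  then show ?thesis by (rule gradient_inner)
qed

definition low_degree_exponents :: "nat \<Rightarrow> ('n::finite \<Rightarrow> nat) set" where
  "low_degree_exponents k = {\<alpha>. sum \<alpha> UNIV \<le> k}"

lemma finite_low_degree_exponents: "finite (low_degree_exponents k :: ('n::finite \<Rightarrow> nat) set)"
proof (rule finite_subset)
  show "low_degree_exponents k \<subseteq> Pi\<^sub>E (UNIV :: 'n set) (\<lambda>_. {..k})"
  proof
    fix \<alpha> :: "'n \<Rightarrow> nat" assume "\<alpha> \<in> low_degree_exponents k"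
    then have "\<alpha> i \<le> k" for i
      using member_le_sum[of i UNIV \<alpha>] by (auto simp: low_degree_exponents_def)
    then show "\<alpha> \<in> Pi\<^sub>E UNIV (\<lambda>_. {..k})" by (simp add: PiE_iff)
  qed
  show "finite (Pi\<^sub>E (UNIV :: 'n set) (\<lambda>_. {..k}))" by (intro finite_PiE) auto
qed

lemma poly_deg_le_iff_comb:
  "poly_deg_le k g \<longleftrightarrow>
     (\<exists>c. g = (\<lambda>x. \<Sum>\<alpha>\<in>low_degree_exponents k. c \<alpha> * monomial_fun \<alpha> x))"
proof
  assume "poly_deg_le k g"
  then obtain c where c: "finite {\<alpha>. c \<alpha> \<noteq> 0}" "\<forall>\<alpha>. c \<alpha> \<noteq> 0 \<longrightarrow> sum \<alpha> UNIV \<le> k"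
    "g = (\<lambda>x. \<Sum>\<alpha>\<in>{\<alpha>. c \<alpha> \<noteq> 0}. c \<alpha> * monomial_fun \<alpha> x)"
    unfolding poly_deg_le_def by blast
  have "(\<Sum>\<alpha>\<in>{\<alpha>. c \<alpha> \<noteq> 0}. c \<alpha> * monomial_fun \<alpha> x)
      = (\<Sum>\<alpha>\<in>low_degree_exponents k. c \<alpha> * monomial_fun \<alpha> x)" for x
    by (rule sum.mono_neutral_left[OF finite_low_degree_exponents])
       (use c in \<open>auto simp: low_degree_exponents_def\<close>)
  then show "\<exists>c. g = (\<lambda>x. \<Sum>\<alpha>\<in>low_degree_exponents k. c \<alpha> * monomial_fun \<alpha> x)"
    using c(3) by auto
next
  assume "\<exists>c. g = (\<lambda>x. \<Sum>\<alpha>\<in>low_degree_exponents k. c \<alpha> * monomial_fun \<alpha> x)"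
  then obtain c where g: "g = (\<lambda>x. \<Sum>\<alpha>\<in>low_degree_exponents k. c \<alpha> * monomial_fun \<alpha> x)"
    by blast
  define c' where "c' \<alpha> = (if \<alpha> \<in> low_degree_exponents k then c \<alpha> else 0)" for \<alpha>
  have sub: "{\<alpha>. c' \<alpha> \<noteq> 0} \<subseteq> low_degree_exponents k" unfolding c'_def by auto
  have "(\<Sum>\<alpha>\<in>low_degree_exponents k. c \<alpha> * monomial_fun \<alpha> x)
      = (\<Sum>\<alpha>\<in>{\<alpha>. c' \<alpha> \<noteq> 0}. c' \<alpha> * monomial_fun \<alpha> x)" for x
    by (rule sum.mono_neutral_cong_right[OF finite_low_degree_exponents sub])
       (auto simp: c'_def)
  then show "poly_deg_le k g"
    unfolding poly_deg_le_def g using sub finite_subset[OF sub finite_low_degree_exponents]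
    by (intro exI[of _ c']) (auto simp: low_degree_exponents_def subset_iff)
qed

(* Finite-dimensional duality, stated for a finite index set M and a family of
  rows e y (y in Y), possibly infinitely many: if d annihilates every vector c that all
  rows annihilate, then d is a finite linear combination of rows.  The proof is Gaussian
  elimination on the columns of M, one column per induction step. *)
definition annihilates :: "'a set \<Rightarrow> 'y set \<Rightarrow> ('y \<Rightarrow> 'a \<Rightarrow> real) \<Rightarrow> ('a \<Rightarrow> real) \<Rightarrow> bool" where
  "annihilates M Y e d \<longleftrightarrow>
     (\<forall>c. (\<forall>y\<in>Y. (\<Sum>a\<in>M. e y a * c a) = 0) \<longrightarrow> (\<Sum>a\<in>M. d a * c a) = 0)"

definition in_row_span :: "'a set \<Rightarrow> 'y set \<Rightarrow> ('y \<Rightarrow> 'a \<Rightarrow> real) \<Rightarrow> ('a \<Rightarrow> real) \<Rightarrow> bool" where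
  "in_row_span M Y e d \<longleftrightarrow>
     (\<exists>F lam. finite F \<and> F \<subseteq> Y \<and> (\<forall>a\<in>M. d a = (\<Sum>y\<in>F. lam y * e y a)))"

lemma annihilates_zero_column:
  assumes ann: "annihilates (insert m M) Y e d" and "finite M" "m \<notin> M"
    and zero: "\<forall>y\<in>Y. e y m = 0"
  shows "d m = 0" and "annihilates M Y e d"
proof -
  let ?c = "\<lambda>a. if a = m then 1 else (0::real)"
  have "\<forall>y\<in>Y. (\<Sum>a\<in>insert m M. e y a * ?c a) = 0"
    using assms by (simp add: if_distrib cong: if_cong)
  then have "(\<Sum>a\<in>insert m M. d a * ?c a) = 0"
    using ann unfolding annihilates_def by (elim allE[of _ ?c]) simp
  then show dm: "d m = 0" using assms by (simp add: if_distrib cong: if_cong)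
  show "annihilates M Y e d"
    unfolding annihilates_def
  proof (intro allI impI)
    fix c assume "\<forall>y\<in>Y. (\<Sum>a\<in>M. e y a * c a) = 0"
    then have "\<forall>y\<in>Y. (\<Sum>a\<in>insert m M. e y a * c a) = 0" using assms by simp
    then show "(\<Sum>a\<in>M. d a * c a) = 0" using ann dm assms unfolding annihilates_def by simp
  qed
qed

lemma in_row_span_zero_column:
  assumes "in_row_span M Y e d" "\<forall>y\<in>Y. e y m = 0" "d m = 0"
  shows "in_row_span (insert m M) Y e d"
proof -
  obtain F lam where F: "finite F" "F \<subseteq> Y" "\<forall>a\<in>M. d a = (\<Sum>y\<in>F. lam y * e y a)"
    using assms(1) unfolding in_row_span_def by blast
  have "(\<Sum>y\<in>F. lam y * e y m) = 0" using F(2) assms(2) by (intro sum.neutral) auto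
  then have "\<forall>a\<in>insert m M. d a = (\<Sum>y\<in>F. lam y * e y a)" using F(3) assms(3) by simp
  then show ?thesis using F(1,2) unfolding in_row_span_def by blast
qed

lemma in_row_span_add_row:
  assumes "finite F" "F \<subseteq> Y" "y0 \<in> Y"
    and comb: "\<forall>a\<in>M. d a = (\<Sum>y\<in>F. lam y * e y a) + mu * e y0 a"
  shows "in_row_span M Y e d"
proof -
  define lam' where "lam' y = (if y \<in> F then lam y else 0) + (if y = y0 then mu else 0)" for y
  have "(\<Sum>y\<in>insert y0 F. lam' y * e y a) = (\<Sum>y\<in>F. lam y * e y a) + mu * e y0 a" for a
  proof -
    have "(\<Sum>y\<in>insert y0 F. lam' y * e y a)
        = (\<Sum>y\<in>insert y0 F. if y \<in> F then lam y * e y a else 0)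
          + (\<Sum>y\<in>insert y0 F. if y = y0 then mu * e y a else 0)"
      unfolding lam'_def sum.distrib[symmetric] by (rule sum.cong) (auto simp: distrib_right)
    also have "\<dots> = (\<Sum>y\<in>F. lam y * e y a) + mu * e y0 a"
      using \<open>finite F\<close> by (simp add: sum.If_cases Int_absorb1 subset_insertI sum.delta)
    finally show ?thesis .
  qed
  then show ?thesis
    using assms unfolding in_row_span_def by (intro exI[of _ "insert y0 F"] exI[of _ lam']) simp
qed

lemma annihilates_pivot:
  assumes ann: "annihilates (insert m M) Y e d" and "finite M" "m \<notin> M"
    and pivot: "y0 \<in> Y" "e y0 m \<noteq> 0"
  shows "annihilates M Y (\<lambda>y a. e y a - e y m / e y0 m * e y0 a) (\<lambda>a. d a - d m / e y0 m * e y0 a)"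
  unfolding annihilates_def
proof (intro allI impI)
  fix c assume orth: "\<forall>y\<in>Y. (\<Sum>a\<in>M. (e y a - e y m / e y0 m * e y0 a) * c a) = 0"
  define S0 where "S0 = (\<Sum>a\<in>M. e y0 a * c a)"
  define c' where "c' = c(m := - S0 / e y0 m)"
  have on_M: "(\<Sum>a\<in>M. f a * c' a) = (\<Sum>a\<in>M. f a * c a)" for f
    using \<open>m \<notin> M\<close> unfolding c'_def by (intro sum.cong) auto
  have reduced: "(\<Sum>a\<in>M. (f a - f m / e y0 m * e y0 a) * c a) = (\<Sum>a\<in>M. f a * c a) - f m / e y0 m * S0"
    for f :: "'a \<Rightarrow> real"
    unfolding S0_def by (simp add: algebra_simps sum_subtractf sum_distrib_left)
  have "\<forall>y\<in>Y. (\<Sum>a\<in>insert m M. e y a * c' a) = 0"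
  proof
    fix y assume "y \<in> Y"
    then have "(\<Sum>a\<in>M. e y a * c a) = e y m / e y0 m * S0" using orth reduced[of "e y"] by simp
    then show "(\<Sum>a\<in>insert m M. e y a * c' a) = 0"
      using assms(2,3) on_M[of "e y"] by (simp add: c'_def)
  qed
  then have "(\<Sum>a\<in>insert m M. d a * c' a) = 0"
    using ann unfolding annihilates_def by blast
  then have "d m * c' m + (\<Sum>a\<in>M. d a * c a) = 0"
    using assms(2,3) on_M[of d] by simp
  then have "(\<Sum>a\<in>M. d a * c a) = d m / e y0 m * S0" using pivot by (simp add: c'_def)
  then show "(\<Sum>a\<in>M. (d a - d m / e y0 m * e y0 a) * c a) = 0" using reduced[of d] by simp
qed

lemma in_row_span_pivot:
  assumes span: "in_row_span M Y (\<lambda>y a. e y a - e y m / e y0 m * e y0 a) (\<lambda>a. d a - d m / e y0 m * e y0 a)"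
    and pivot: "y0 \<in> Y" "e y0 m \<noteq> 0"
  shows "in_row_span (insert m M) Y e d"
proof -
  obtain F lam where F: "finite F" "F \<subseteq> Y"
    and comb: "\<forall>a\<in>M. d a - d m / e y0 m * e y0 a = (\<Sum>y\<in>F. lam y * (e y a - e y m / e y0 m * e y0 a))"
    using span unfolding in_row_span_def by blast
  define mu where "mu = (d m - (\<Sum>y\<in>F. lam y * e y m)) / e y0 m"
  have "d a = (\<Sum>y\<in>F. lam y * e y a) + mu * e y0 a" if "a \<in> insert m M" for a
  proof (cases "a = m")
    case True
    then show ?thesis using pivot by (simp add: mu_def)
  next
    case False
    then have "d a - d m / e y0 m * e y0 a
        = (\<Sum>y\<in>F. lam y * e y a) - (\<Sum>y\<in>F. lam y * e y m) / e y0 m * e y0 a"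
      using comb that by (simp add: algebra_simps sum_subtractf sum_distrib_left sum_distrib_right
          sum_divide_distrib)
    then show ?thesis unfolding mu_def using pivot by (simp add: field_simps)
  qed
  then show ?thesis using F pivot by (intro in_row_span_add_row) auto
qed

lemma annihilates_imp_in_row_span:
  assumes "finite M" "annihilates M Y e d"
  shows "in_row_span M Y e d"
  using assms
proof (induction M arbitrary: e d rule: finite_induct)
  case empty
  show ?case unfolding in_row_span_def by (rule exI[of _ "{}"]) auto
next
  case (insert m M)
  show ?case
  proof (cases "\<exists>y0\<in>Y. e y0 m \<noteq> 0")
    case False
    then have zero: "\<forall>y\<in>Y. e y m = 0" by auto
    show ?thesis
      using annihilates_zero_column[OF insert.prems insert.hyps(1,2) zero] insert.IH zero
      by (intro in_row_span_zero_column) auto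
  next
    case True
    then obtain y0 where "y0 \<in> Y" "e y0 m \<noteq> 0" by blast
    then show ?thesis
      using annihilates_pivot[OF insert.prems insert.hyps(1,2)] insert.IH
      by (intro in_row_span_pivot) auto
  qed
qed

lemma tangent_spaceD:
  assumes "q \<in> tangent_space I p" "poly_fun f" "\<forall>y\<in>real_variety I. f y = 0"
  shows "(q - p) \<bullet> gradient f p = 0"
  using assms unfolding tangent_space_def by simp

lemma tangent_direction_representation:
  fixes I :: "(real^'n::finite \<Rightarrow> real) set" and p q :: "real^'n"
  assumes tangent: "q \<in> tangent_space I p"
  shows "\<exists>F lam. finite F \<and> F \<subseteq> real_variety I \<and>
     (\<forall>g. poly_deg_le k g \<longrightarrow> (q - p) \<bullet> gradient g p = (\<Sum>y\<in>F. lam y * g y))"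
proof -
  let ?M = "low_degree_exponents k :: ('n \<Rightarrow> nat) set"
  let ?D = "\<lambda>\<alpha>. frechet_derivative (monomial_fun \<alpha>) (at p) (q - p)"
  have "annihilates ?M (real_variety I) (\<lambda>y \<alpha>. monomial_fun \<alpha> y) ?D"
    unfolding annihilates_def
  proof (intro allI impI)
    fix c assume "\<forall>y\<in>real_variety I. (\<Sum>\<alpha>\<in>?M. monomial_fun \<alpha> y * c \<alpha>) = 0"
    then have "\<forall>y\<in>real_variety I. (\<Sum>\<alpha>\<in>?M. c \<alpha> * monomial_fun \<alpha> y) = 0"
      by (simp add: mult.commute)
    moreover have "poly_fun (\<lambda>x. \<Sum>\<alpha>\<in>?M. c \<alpha> * monomial_fun \<alpha> x)"
      unfolding poly_fun_def poly_deg_le_iff_comb by blast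
    ultimately have "(q - p) \<bullet> gradient (\<lambda>x. \<Sum>\<alpha>\<in>?M. c \<alpha> * monomial_fun \<alpha> x) p = 0"
      using tangent by (intro tangent_spaceD)
    then show "(\<Sum>\<alpha>\<in>?M. ?D \<alpha> * c \<alpha>) = 0"
      unfolding gradient_monomial_comb by (simp add: mult.commute)
  qed
  then have "\<exists>F lam. finite F \<and> F \<subseteq> real_variety I \<and>
      (\<forall>\<alpha>\<in>?M. ?D \<alpha> = (\<Sum>y\<in>F. lam y * monomial_fun \<alpha> y))"
    by (rule annihilates_imp_in_row_span[OF finite_low_degree_exponents, unfolded in_row_span_def])
  then obtain F lam where F: "finite F" "F \<subseteq> real_variety I"
    and lam: "\<forall>\<alpha>\<in>?M. ?D \<alpha> = (\<Sum>y\<in>F. lam y * monomial_fun \<alpha> y)"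
    by blast
  have "(q - p) \<bullet> gradient g p = (\<Sum>y\<in>F. lam y * g y)" if deg: "poly_deg_le k g" for g
  proof -
    obtain c where g: "g = (\<lambda>x. \<Sum>\<alpha>\<in>?M. c \<alpha> * monomial_fun \<alpha> x)"
      using deg unfolding poly_deg_le_iff_comb by blast
    have "(q - p) \<bullet> gradient g p = (\<Sum>\<alpha>\<in>?M. c \<alpha> * (\<Sum>y\<in>F. lam y * monomial_fun \<alpha> y))"
      unfolding g gradient_monomial_comb using lam by (intro sum.cong) auto
    also have "\<dots> = (\<Sum>y\<in>F. lam y * g y)"
      unfolding g by (simp add: sum_distrib_left sum.swap[of _ F] algebra_simps)
    finally show ?thesis .
  qed
  then show ?thesis using F by blast
qed

definition affine_fun :: "('a::real_vector \<Rightarrow> real) \<Rightarrow> bool" where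
  "affine_fun f \<longleftrightarrow> (\<forall>x y t. f (x + t *\<^sub>R (y - x)) = f x + t * (f y - f x))"

lemma affine_fun_comb:
  assumes "\<And>a. a \<in> A \<Longrightarrow> affine_fun (f a)"
  shows "affine_fun (\<lambda>x. \<Sum>a\<in>A. c a * f a x)"
  unfolding affine_fun_def
proof (intro allI)
  fix x y and t :: real
  have "(\<Sum>a\<in>A. c a * f a (x + t *\<^sub>R (y - x)))
      = (\<Sum>a\<in>A. c a * f a x + t * (c a * f a y - c a * f a x))"
  proof (rule sum.cong[OF refl])
    fix a assume "a \<in> A"
    then have line: "f a (x + t *\<^sub>R (y - x)) = f a x + t * (f a y - f a x)"
      using assms unfolding affine_fun_def by blast
    show "c a * f a (x + t *\<^sub>R (y - x)) = c a * f a x + t * (c a * f a y - c a * f a x)"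
      unfolding line by (simp add: algebra_simps)
  qed
  also have "\<dots> = (\<Sum>a\<in>A. c a * f a x) + t * ((\<Sum>a\<in>A. c a * f a y) - (\<Sum>a\<in>A. c a * f a x))"
    by (simp add: sum.distrib sum_distrib_left[symmetric] sum_subtractf[symmetric])
  finally show "(\<Sum>a\<in>A. c a * f a (x + t *\<^sub>R (y - x)))
      = (\<Sum>a\<in>A. c a * f a x) + t * ((\<Sum>a\<in>A. c a * f a y) - (\<Sum>a\<in>A. c a * f a x))" .
qed

(* A monomial of degree at most one is a constant or a coordinate. *)
lemma affine_monomial:
  fixes \<alpha> :: "'n::finite \<Rightarrow> nat"
  assumes "sum \<alpha> UNIV \<le> 1"
  shows "affine_fun (monomial_fun \<alpha>)"
proof (cases "\<forall>i. \<alpha> i = 0")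
  case True
  then show ?thesis unfolding affine_fun_def monomial_fun_def by simp
next
  case False
  then obtain i where "\<alpha> i \<noteq> 0" by blast
  moreover have "\<alpha> i \<le> 1" using member_le_sum[of i UNIV \<alpha>] assms by simp
  ultimately have i: "\<alpha> i = 1" by simp
  have others: "\<alpha> j = 0" if "j \<noteq> i" for j
  proof -
    have "sum \<alpha> {i, j} \<le> sum \<alpha> UNIV" by (rule sum_mono2) auto
    then show ?thesis using that i assms by simp
  qed
  have "monomial_fun \<alpha> x = x $ i" for x :: "real^'n"
  proof -
    have "monomial_fun \<alpha> x = (x $ i) ^ \<alpha> i * (\<Prod>j\<in>UNIV - {i}. (x $ j) ^ \<alpha> j)"
      unfolding monomial_fun_def by (simp add: prod.remove)
    also have "(\<Prod>j\<in>UNIV - {i}. (x $ j) ^ \<alpha> j) = 1"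
      using others by (intro prod.neutral) auto
    finally show ?thesis using i by simp
  qed
  then show ?thesis unfolding affine_fun_def by (simp add: algebra_simps)
qed

lemma poly_deg_le_1_affine:
  assumes "poly_deg_le 1 l"
  shows "affine_fun l"
proof -
  obtain c where "l = (\<lambda>x. \<Sum>\<alpha>\<in>low_degree_exponents 1. c \<alpha> * monomial_fun \<alpha> x)"
    using assms unfolding poly_deg_le_iff_comb by blast
  moreover have "affine_fun (monomial_fun \<alpha>)" if "\<alpha> \<in> low_degree_exponents 1" for \<alpha>
    using that by (intro affine_monomial) (simp add: low_degree_exponents_def)
  ultimately show ?thesis using affine_fun_comb by blast
qed

lemma affine_fun_nonneg_convex:
  assumes "affine_fun l"
  shows "convex {x. l x \<ge> 0}"
  unfolding convex_alt
proof (intro ballI allI impI)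
  fix x y and u :: real
  assume "x \<in> {x. l x \<ge> 0}" "y \<in> {x. l x \<ge> 0}" "0 \<le> u \<and> u \<le> 1"
  moreover have "(1 - u) *\<^sub>R x + u *\<^sub>R y = x + u *\<^sub>R (y - x)" by (simp add: algebra_simps)
  then have "l ((1 - u) *\<^sub>R x + u *\<^sub>R y) = (1 - u) * l x + u * l y"
    using assms unfolding affine_fun_def by (simp add: algebra_simps)
  ultimately show "(1 - u) *\<^sub>R x + u *\<^sub>R y \<in> {x. l x \<ge> 0}" by simp
qed

lemma affine_fun_nonneg_hull:
  assumes "affine_fun l" "\<And>y. y \<in> V \<Longrightarrow> l y \<ge> 0" "z \<in> convex hull V"
  shows "l z \<ge> 0"
  using hull_minimal[of V "{x. l x \<ge> 0}" convex] affine_fun_nonneg_convex assms by blast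

lemma affine_fun_derivative:
  assumes "affine_fun l" "(l has_derivative l') (at p)"
  shows "l' (q - p) = l q - l p"
proof -
  have "((\<lambda>s::real. p + s *\<^sub>R (q - p)) has_derivative (\<lambda>s. s *\<^sub>R (q - p))) (at 0)"
    by (auto intro!: derivative_eq_intros)
  moreover have "(l has_derivative l') (at (p + 0 *\<^sub>R (q - p)))" using assms(2) by simp
  ultimately have "((\<lambda>s::real. l (p + s *\<^sub>R (q - p))) has_derivative (\<lambda>s. l' (s *\<^sub>R (q - p)))) (at 0)"
    by (rule has_derivative_compose)
  moreover have "(\<lambda>s::real. l (p + s *\<^sub>R (q - p))) = (\<lambda>s. l p + s * (l q - l p))"
    using assms(1) unfolding affine_fun_def by auto
  then have "((\<lambda>s::real. l (p + s *\<^sub>R (q - p))) has_derivative (\<lambda>s. s * (l q - l p))) (at 0)"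
    by (auto intro!: derivative_eq_intros)
  ultimately have "(\<lambda>s. l' (s *\<^sub>R (q - p))) = (\<lambda>s. s * (l q - l p))"
    by (rule has_derivative_unique)
  from fun_cong[OF this, of 1] show ?thesis by simp
qed

lemma affine_fun_extrapolate:
  assumes "affine_fun l"
  shows "l (p + s *\<^sub>R (p - q)) = (1 + s) * l p - s * l q"
proof -
  have line: "l (p + (- s) *\<^sub>R (q - p)) = l p + (- s) * (l q - l p)"
    using assms unfolding affine_fun_def by blast
  have "p + (- s) *\<^sub>R (q - p) = p + s *\<^sub>R (p - q)" by (simp add: algebra_simps)
  then show ?thesis using line by (simp add: algebra_simps)
qed

lemma rel_interior_extend_beyond:
  fixes S :: "'a::euclidean_space set"
  assumes q: "q \<in> rel_interior S" and F: "finite F" "F \<subseteq> S"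
  shows "\<exists>t>0. \<forall>y\<in>F. q + t *\<^sub>R (q - y) \<in> S"
proof -
  obtain e where e: "e > 0" "ball q e \<inter> affine hull S \<subseteq> S"
    using q unfolding mem_rel_interior_ball by blast
  define R where "R = (\<Sum>y\<in>F. norm (q - y)) + 1"
  have R: "R \<ge> 1" unfolding R_def by (simp add: sum_nonneg)
  define t where "t = e / (2 * R)"
  have t: "t > 0" unfolding t_def using e R by simp
  have "q + t *\<^sub>R (q - y) \<in> S" if y: "y \<in> F" for y
  proof -
    have "norm (q - y) \<le> (\<Sum>y\<in>F. norm (q - y))"
      using F y by (intro member_le_sum) auto
    then have "norm (q - y) \<le> R" unfolding R_def by simp
    then have "dist q (q + t *\<^sub>R (q - y)) \<le> t * R"
      using t by (simp add: dist_norm mult_left_mono)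
    also have "\<dots> < e" unfolding t_def using e R by (simp add: field_simps)
    finally have "q + t *\<^sub>R (q - y) \<in> ball q e" by simp
    moreover have "(1 + t) *\<^sub>R q + (- t) *\<^sub>R y \<in> affine hull S"
      using y F q rel_interior_subset by (intro mem_affine affine_affine_hull hull_inc) auto
    then have "q + t *\<^sub>R (q - y) \<in> affine hull S" by (simp add: algebra_simps)
    ultimately show ?thesis using e by blast
  qed
  then show ?thesis using t by blast
qed

lemma beyond_rel_frontier_not_in_closure:
  fixes S :: "'a::euclidean_space set"
  assumes "convex S" "p \<in> rel_frontier S" "q \<in> rel_interior S" "s > 0"
  shows "p + s *\<^sub>R (p - q) \<notin> closure S"
proof
  assume r: "p + s *\<^sub>R (p - q) \<in> closure S"
  have "p + s *\<^sub>R (p - q) - (s / (1 + s)) *\<^sub>R (p + s *\<^sub>R (p - q) - q) \<in> rel_interior S"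
    by (rule rel_interior_closure_convex_shrink) (use assms r in auto)
  moreover have "(s / (1 + s)) *\<^sub>R (p + s *\<^sub>R (p - q) - q) = s *\<^sub>R (p - q)"
  proof -
    have "p + s *\<^sub>R (p - q) - q = (1 + s) *\<^sub>R (p - q)" by (simp add: algebra_simps)
    then show ?thesis using \<open>s > 0\<close> by simp
  qed
  ultimately have "p \<in> rel_interior S" by simp
  then show False using assms(2) unfolding rel_frontier_def by simp
qed

lemma two_mul_le_weighted_squares:
  fixes a b e :: real
  assumes "e > 0"
  shows "2 * a * b \<le> e * b\<^sup>2 + a\<^sup>2 / e"
proof -
  have "0 \<le> (a - e * b)\<^sup>2" by simp
  then have "2 * a * b * e \<le> e * b\<^sup>2 * e + a\<^sup>2" by (simp add: power2_eq_square algebra_simps)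
  then show ?thesis using assms by (simp add: field_simps)
qed

(* Weighted Cauchy-Schwarz type estimate used to control the cross terms
  2 g_i(y) g_i(p) produced by differentiating a sum of squares. *)
lemma weighted_cross_term_bound:
  fixes lam :: "'y \<Rightarrow> real" and a :: "'y \<Rightarrow> 'i \<Rightarrow> real" and b :: "'i \<Rightarrow> real"
  assumes "eps > 0"
  shows "(\<Sum>y\<in>F. lam y * (\<Sum>i\<in>A. 2 * a y i * b i))
       \<le> (\<Sum>y\<in>F. \<bar>lam y\<bar> * (eps * (\<Sum>i\<in>A. (b i)\<^sup>2) + (\<Sum>i\<in>A. (a y i)\<^sup>2) / eps))"
proof (rule sum_mono)
  fix y
  have "\<bar>\<Sum>i\<in>A. 2 * a y i * b i\<bar> \<le> (\<Sum>i\<in>A. 2 * \<bar>a y i\<bar> * \<bar>b i\<bar>)"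
    by (rule order.trans[OF sum_abs]) (simp add: abs_mult)
  also have "\<dots> \<le> (\<Sum>i\<in>A. eps * \<bar>b i\<bar>\<^sup>2 + \<bar>a y i\<bar>\<^sup>2 / eps)"
    by (intro sum_mono two_mul_le_weighted_squares assms)
  also have "\<dots> = eps * (\<Sum>i\<in>A. (b i)\<^sup>2) + (\<Sum>i\<in>A. (a y i)\<^sup>2) / eps"
    by (simp add: sum.distrib sum_distrib_left sum_divide_distrib)
  finally have "\<bar>\<Sum>i\<in>A. 2 * a y i * b i\<bar> \<le> eps * (\<Sum>i\<in>A. (b i)\<^sup>2) + (\<Sum>i\<in>A. (a y i)\<^sup>2) / eps" .
  then have "\<bar>lam y\<bar> * \<bar>\<Sum>i\<in>A. 2 * a y i * b i\<bar>
      \<le> \<bar>lam y\<bar> * (eps * (\<Sum>i\<in>A. (b i)\<^sup>2) + (\<Sum>i\<in>A. (a y i)\<^sup>2) / eps)"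
    by (rule mult_left_mono) simp
  moreover have "lam y * (\<Sum>i\<in>A. 2 * a y i * b i) \<le> \<bar>lam y\<bar> * \<bar>\<Sum>i\<in>A. 2 * a y i * b i\<bar>"
    by (metis abs_ge_self abs_mult)
  ultimately show "lam y * (\<Sum>i\<in>A. 2 * a y i * b i)
      \<le> \<bar>lam y\<bar> * (eps * (\<Sum>i\<in>A. (b i)\<^sup>2) + (\<Sum>i\<in>A. (a y i)\<^sup>2) / eps)"
    by (rule order.trans[rotated])
qed

lemma sos_mod_nonneg_on_variety:
  assumes "sos_mod I k l" "y \<in> real_variety I"
  shows "l y \<ge> 0"
proof -
  obtain gs where "(\<lambda>x. l x - (\<Sum>g\<leftarrow>gs. (g x)\<^sup>2)) \<in> I"
    using assms(1) unfolding sos_mod_def by blast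
  then have "l y = (\<Sum>g\<leftarrow>gs. (g y)\<^sup>2)" using assms(2) unfolding real_variety_def by force
  moreover have "0 \<le> (\<Sum>g\<leftarrow>gs. (g y)\<^sup>2)" by (rule sum_list_nonneg) auto
  ultimately show ?thesis by simp
qed

(* Differentiating a sum-of-squares certificate l = sum g_i^2 (mod I) at p along a
  tangent direction q - p: the ideal part contributes nothing. *)
lemma sos_certificate_directional:
  fixes I :: "(real^'n::finite \<Rightarrow> real) set"
  assumes I: "poly_ideal I" and tangent: "q \<in> tangent_space I p"
    and l: "poly_deg_le 1 l" "sos_mod I k l"
  obtains N :: nat and G where "\<forall>i<N. poly_deg_le k (G i)"
    and "\<forall>y\<in>real_variety I. l y = (\<Sum>i<N. (G i y)\<^sup>2)"
    and "l q - l p = (\<Sum>i<N. 2 * ((q - p) \<bullet> gradient (G i) p) * G i p)"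
proof -
  obtain gs where gs: "\<forall>g\<in>set gs. poly_deg_le k g"
    and cert: "(\<lambda>x. l x - (\<Sum>g\<leftarrow>gs. (g x)\<^sup>2)) \<in> I"
    using l(2) unfolding sos_mod_def by blast
  define N where "N = length gs"
  define G where "G i = gs ! i" for i
  have G: "\<forall>i<N. poly_deg_le k (G i)" using gs unfolding G_def N_def by simp
  define f where "f x = l x - (\<Sum>i<N. (G i x)\<^sup>2)" for x
  have "f \<in> I" using cert unfolding f_def G_def N_def by (simp add: sum_list_sum_nth atLeast0LessThan)
  then have f_poly: "poly_fun f" and f_zero: "\<forall>y\<in>real_variety I. f y = 0"
    using I unfolding poly_ideal_def real_variety_def by auto
  define l' where "l' = frechet_derivative l (at p)"
  define G' where "G' i = frechet_derivative (G i) (at p)" for i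
  have dl: "(l has_derivative l') (at p)"
    unfolding l'_def by (rule poly_deg_le_has_derivative[OF l(1)])
  have dG: "(G i has_derivative G' i) (at p)" if "i < N" for i
    unfolding G'_def using G that by (intro poly_deg_le_has_derivative) auto
  have "(f has_derivative (\<lambda>v. l' v - (\<Sum>i<N. of_nat 2 * G' i v * G i p ^ (2 - 1)))) (at p)"
    unfolding f_def[abs_def] by (intro has_derivative_diff dl has_derivative_sum has_derivative_power dG) auto
  then have "l' (q - p) = (\<Sum>i<N. 2 * G' i (q - p) * G i p)"
    using tangent_spaceD[OF tangent f_poly f_zero] by (simp add: gradient_inner)
  also have "\<dots> = (\<Sum>i<N. 2 * ((q - p) \<bullet> gradient (G i) p) * G i p)"
    by (intro sum.cong refl) (simp add: gradient_inner[OF dG])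
  finally have lq: "l q - l p = (\<Sum>i<N. 2 * ((q - p) \<bullet> gradient (G i) p) * G i p)"
    using affine_fun_derivative[OF poly_deg_le_1_affine[OF l(1)] dl] by simp
  have "\<forall>y\<in>real_variety I. l y = (\<Sum>i<N. (G i y)\<^sup>2)" using f_zero unfolding f_def by simp
  with G lq show ?thesis by (intro that)
qed

lemma sos_directional_bound:
  fixes I :: "(real^'n::finite \<Rightarrow> real) set"
  assumes I: "poly_ideal I" and tangent: "q \<in> tangent_space I p"
    and p: "p \<in> real_variety I" and F: "F \<subseteq> real_variety I"
    and repr: "\<forall>g. poly_deg_le k g \<longrightarrow> (q - p) \<bullet> gradient g p = (\<Sum>y\<in>F. lam y * g y)"
    and l: "poly_deg_le 1 l" "sos_mod I k l" and eps: "eps > 0"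
  shows "l q - l p \<le> (\<Sum>y\<in>F. \<bar>lam y\<bar> * (eps * l p + l y / eps))"
proof -
  obtain N :: nat and G where G: "\<forall>i<N. poly_deg_le k (G i)"
    and sq: "\<forall>y\<in>real_variety I. l y = (\<Sum>i<N. (G i y)\<^sup>2)"
    and diff: "l q - l p = (\<Sum>i<N. 2 * ((q - p) \<bullet> gradient (G i) p) * G i p)"
    using sos_certificate_directional[OF I tangent l] by blast
  have "l q - l p = (\<Sum>i<N. 2 * (\<Sum>y\<in>F. lam y * G i y) * G i p)"
    unfolding diff using G repr by (intro sum.cong) auto
  also have "\<dots> = (\<Sum>y\<in>F. lam y * (\<Sum>i<N. 2 * G i y * G i p))"
    by (simp add: sum_distrib_left sum_distrib_right sum.swap[of _ F] algebra_simps)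
  also have "\<dots> \<le> (\<Sum>y\<in>F. \<bar>lam y\<bar> * (eps * (\<Sum>i<N. (G i p)\<^sup>2) + (\<Sum>i<N. (G i y)\<^sup>2) / eps))"
    by (rule weighted_cross_term_bound[OF eps])
  also have "\<dots> = (\<Sum>y\<in>F. \<bar>lam y\<bar> * (eps * l p + l y / eps))"
    using sq p F by (intro sum.cong) auto
  finally show ?thesis .
qed

(* The key estimate: a single constant C controls l q by l p for every linear l that
  is k-sos modulo I.  (Points y of F are bounded via the point q + t(q - y) of the hull.) *)
lemma tangent_sos_bound:
  fixes I :: "(real^'n::finite \<Rightarrow> real) set"
  assumes I: "poly_ideal I" and p: "p \<in> real_variety I"
    and tangent: "q \<in> tangent_space I p"
    and interior: "q \<in> rel_interior (convex hull real_variety I)"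
  shows "\<exists>C. \<forall>l. poly_deg_le 1 l \<and> sos_mod I k l \<longrightarrow> l q \<le> C * l p"
proof -
  define V where "V = real_variety I"
  have "\<exists>F lam. finite F \<and> F \<subseteq> V \<and>
      (\<forall>g. poly_deg_le k g \<longrightarrow> (q - p) \<bullet> gradient g p = (\<Sum>y\<in>F. lam y * g y))"
    unfolding V_def by (rule tangent_direction_representation[OF tangent])
  then obtain F lam where F: "finite F" "F \<subseteq> V"
    and repr: "\<forall>g. poly_deg_le k g \<longrightarrow> (q - p) \<bullet> gradient g p = (\<Sum>y\<in>F. lam y * g y)"
    by blast
  have "F \<subseteq> convex hull V" using F(2) hull_subset[of V convex] by (rule order.trans)
  then obtain t where t: "t > 0" and beyond: "\<forall>y\<in>F. q + t *\<^sub>R (q - y) \<in> convex hull V"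
    using rel_interior_extend_beyond[OF interior[folded V_def] F(1)] by blast
  define K where "K = (1 + t) / t"
  define Lam where "Lam = (\<Sum>y\<in>F. \<bar>lam y\<bar>)"
  define eps where "eps = 4 * Lam * K + 1"
  have K: "K > 0" unfolding K_def using t by simp
  have Lam: "Lam \<ge> 0" unfolding Lam_def by (simp add: sum_nonneg)
  have "Lam * K \<ge> 0" using K Lam by simp
  then have "eps > 0" unfolding eps_def by simp
  moreover have "Lam * K \<le> eps / 4" unfolding eps_def by simp
  ultimately have eps: "eps > 0" "Lam * K / eps \<le> 1/4" by (simp_all add: field_simps)
  have "l q \<le> (4/3 * (1 + Lam * eps)) * l p" if l: "poly_deg_le 1 l" "sos_mod I k l" for l
  proof -
    have aff: "affine_fun l" by (rule poly_deg_le_1_affine[OF l(1)])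
    have nonneg: "l z \<ge> 0" if "z \<in> convex hull V" for z
      by (rule affine_fun_nonneg_hull[OF aff _ that])
         (simp add: V_def sos_mod_nonneg_on_variety[OF l(2)])
    have lq: "l q \<ge> 0"
      using nonneg[OF rel_interior_subset[THEN subsetD, OF interior[folded V_def]]] .
    have ly: "l y \<le> K * l q" if "y \<in> F" for y
    proof -
      have "q + t *\<^sub>R (q - y) \<in> convex hull V" using beyond that by blast
      from nonneg[OF this] have "0 \<le> (1 + t) * l q - t * l y"
        unfolding affine_fun_extrapolate[OF aff] .
      then show ?thesis unfolding K_def using t by (simp add: field_simps)
    qed
    have "l q - l p \<le> (\<Sum>y\<in>F. \<bar>lam y\<bar> * (eps * l p + l y / eps))"
      using sos_directional_bound[OF I tangent p _ repr l eps(1)] F(2) unfolding V_def by blast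
    also have "\<dots> \<le> (\<Sum>y\<in>F. \<bar>lam y\<bar> * (eps * l p + K * l q / eps))"
      using ly eps(1) by (intro sum_mono mult_left_mono) (simp_all add: divide_right_mono)
    also have "\<dots> = Lam * eps * l p + (Lam * K / eps) * l q"
      unfolding Lam_def sum_distrib_right[symmetric] by (simp add: field_simps)
    also have "\<dots> \<le> Lam * eps * l p + 1/4 * l q"
      using mult_right_mono[OF eps(2) lq] by simp
    finally show ?thesis by (simp add: algebra_simps)
  qed
  then show ?thesis by blast
qed

(* If TH_k were exact, every point outside the closed convex hull would be separated
  by some k-sos linear l; the point r = p + s(p - q) just beyond p is outside, yet the
  key estimate forces l r >= (1 + s - s C) l p >= 0 for s small. *)
theorem mainTheorem14:
  fixes I :: "(real^'n::finite \<Rightarrow> real) set"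
  assumes "poly_ideal I"
    and "\<exists>p. convex_singular I p"
  shows "\<not> TH_exact I"
proof
  assume "TH_exact I"
  then obtain k where theta: "theta_body k I = closure (convex hull real_variety I)"
    unfolding TH_exact_def TH_exact_k_def by blast
  obtain p q where p: "p \<in> real_variety I" "p \<in> rel_frontier (convex hull real_variety I)"
    and q: "q \<in> tangent_space I p" "q \<in> rel_interior (convex hull real_variety I)"
    using assms(2) unfolding convex_singular_def by blast
  obtain C where C: "\<forall>l. poly_deg_le 1 l \<and> sos_mod I k l \<longrightarrow> l q \<le> C * l p"
    using tangent_sos_bound[OF assms(1) p(1) q] by blast
  define s where "s = 1 / (2 * max C 1)"
  have s: "s > 0" "s * C \<le> 1/2" unfolding s_def by (auto simp: field_simps max_def)
  have "p + s *\<^sub>R (p - q) \<notin> theta_body k I"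
    unfolding theta using beyond_rel_frontier_not_in_closure[OF convex_convex_hull p(2) q(2) s(1)] .
  then obtain l where l: "poly_deg_le 1 l" "sos_mod I k l" and neg: "l (p + s *\<^sub>R (p - q)) < 0"
    unfolding theta_body_def by force
  have lp: "l p \<ge> 0" by (rule sos_mod_nonneg_on_variety[OF l(2) p(1)])
  have "s * l q \<le> s * (C * l p)" using C l s(1) by (simp add: mult_left_mono)
  then have "(1 + s - s * C) * l p < 0"
    using neg unfolding affine_fun_extrapolate[OF poly_deg_le_1_affine[OF l(1)]]
    by (simp add: algebra_simps)
  moreover have "1 + s - s * C \<ge> 0" using s by simp
  ultimately show False using lp by (simp add: mult_less_0_iff)
qed

end
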